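(* Let $E$ be a complex Banach lattice and let $A: E \supseteq D(A) \to E$ be a densely defined, closed, real linear operator. Let $u \in E_+$ and let $\varphi \in E'_+$ be strictly positive. Assume: (Domination) there are integers $m_1, m_2 \ge 0$ such that $D(A^{m_1}) \subseteq E_u$ and $D((A')^{m_2}) \subseteq (E')_\varphi$; (Spectral) there is $\lambda_0 \in \mathbb{R}$ which is a geometrically simple eigenvalue of $A$ and an eigenvalue of $A'$, such that $\ker(\lambda_0 - A)$ is spanned by a vector $v$ with $v \succeq u$, and $\ker(\lambda_0 - A')$ contains an element $\psi$ with $\psi \succeq \varphi$. Let $\mu_0$ be a real number in $\rho(A)$. (a) If $R(\mu_0,A)\succeq -u\otimes\varphi$, then $R(\mu_0,A)^n\succeq -u\otimes\varphi$ for all $n\in\mathbb{N}$. (b) If $R(\mu_0,A)\preceq u\otimes\varphi$, then $(-1)^{n-1}R(\mu_0,A)^n\preceq u\otimes\varphi$ for all $n\in\mathbb{N}$.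
   Context: $E_{\mathbb{R}}$ denotes the real part of $E$. A linear operator $A$ is real if $D(A) = (D(A)\cap E_{\mathbb{R}}) + i(D(A)\cap E_{\mathbb{R}})$ and $A$ maps $D(A)\cap E_{\mathbb{R}}$ into $E_{\mathbb{R}}$. $R(\mu,A) = (\mu - A)^{-1}$. For real vectors, $v \succeq u$ means $v \ge cu$ for some $c>0$. For bounded real operators, $T\succeq S$ (equivalently $S\preceq T$) means $T - cS$ is positive for some $c>0$. $u\otimes\varphi$ is $f\mapsto\langle\varphi,f\rangle u$. $\varphi$ strictly positive: $\langle\varphi,f\rangle>0$ for all $0\ne f\in E_+$. $E_u = \{x : |x|\le cu \text{ for some } c\ge0\}$; $(E')_\varphi = \{x'\in E' : |x'|\le c\varphi \text{ for some } c\ge 0\}$. Geometrically simple: one-dimensional eigenspace. *)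

theory Defs
  imports "HOL-Analysis.Analysis"
begin

definition lat_abs :: "'a::{lattice, uminus} \<Rightarrow> 'a" where
  "lat_abs x = sup x (- x)"

class banach_lattice = banach + ordered_real_vector + lattice +
  assumes lattice_norm: "sup x (- x) \<le> sup y (- y) \<Longrightarrow> norm x \<le> norm y"

section \<open>The complexification E = E_R + i E_R, modelled as pairs (real part, imaginary part)\<close>

text \<open>The topology is the product topology of E_R x E_R, which is the topology of
  the complex Banach lattice norm (the two norms are equivalent).\<close>

definition cJ :: "'a::real_vector \<times> 'a \<Rightarrow> 'a \<times> 'a" where
  "cJ z = (- snd z, fst z)"   \<comment> \<open>multiplication by the imaginary unit\<close>

definition cscale :: "complex \<Rightarrow> 'a::real_vector \<times> 'a \<Rightarrow> 'a \<times> 'a" where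
  "cscale c z = Re c *\<^sub>R z + Im c *\<^sub>R cJ z"

definition creal :: "'a::real_vector \<Rightarrow> 'a \<times> 'a" where
  "creal x = (x, 0)"

definition Epos :: "('a::banach_lattice \<times> 'a) set" where
  "Epos = {creal x | x. 0 \<le> x}"

text \<open>Complex modulus |x + iy| = sup over t of (cos t x + sin t y); hence
  |z| <= w iff every element of that set is <= w.\<close>
definition cmod_le :: "'a::banach_lattice \<times> 'a \<Rightarrow> 'a \<Rightarrow> bool" where
  "cmod_le z w \<longleftrightarrow> (\<forall>t. cos t *\<^sub>R fst z + sin t *\<^sub>R snd z \<le> w)"

definition princ_ideal :: "'a::banach_lattice \<Rightarrow> ('a \<times> 'a) set" where
  "princ_ideal u = {z. \<exists>c\<ge>0. cmod_le z (c *\<^sub>R u)}"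

definition clinear_on :: "('a::real_vector \<times> 'a) set \<Rightarrow> ('a \<times> 'a \<Rightarrow> 'a \<times> 'a) \<Rightarrow> bool" where
  "clinear_on D A \<longleftrightarrow> subspace D \<and> (\<forall>z\<in>D. cJ z \<in> D) \<and>
     (\<forall>z\<in>D. \<forall>w\<in>D. A (z + w) = A z + A w) \<and>
     (\<forall>z\<in>D. \<forall>r::real. A (r *\<^sub>R z) = r *\<^sub>R A z) \<and>
     (\<forall>z\<in>D. A (cJ z) = cJ (A z))"

definition bounded_clinear :: "('a::real_normed_vector \<times> 'a \<Rightarrow> 'a \<times> 'a) \<Rightarrow> bool" where
  "bounded_clinear T \<longleftrightarrow> bounded_linear T \<and> (\<forall>z. T (cJ z) = cJ (T z))"

definition cdual :: "('a::real_normed_vector \<times> 'a \<Rightarrow> complex) set" where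
  "cdual = {f. bounded_linear f \<and> (\<forall>z. f (cJ z) = \<i> * f z)}"

definition closed_op :: "('a::real_normed_vector \<times> 'a) set \<Rightarrow> ('a \<times> 'a \<Rightarrow> 'a \<times> 'a) \<Rightarrow> bool" where
  "closed_op D A \<longleftrightarrow> closed {(z, A z) | z. z \<in> D}"

definition densely_defined :: "('a::real_normed_vector \<times> 'a) set \<Rightarrow> bool" where
  "densely_defined D \<longleftrightarrow> closure D = UNIV"

definition real_op :: "('a::real_vector \<times> 'a) set \<Rightarrow> ('a \<times> 'a \<Rightarrow> 'a \<times> 'a) \<Rightarrow> bool" where
  "real_op D A \<longleftrightarrow> D = {(x, y). creal x \<in> D \<and> creal y \<in> D} \<and>
     (\<forall>x. creal x \<in> D \<longrightarrow> snd (A (creal x)) = 0)"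

fun dom_pow :: "'b set \<Rightarrow> 'b set \<Rightarrow> ('b \<Rightarrow> 'b) \<Rightarrow> nat \<Rightarrow> 'b set" where
  "dom_pow X D A 0 = X"
| "dom_pow X D A (Suc m) = {z \<in> D. A z \<in> dom_pow X D A m}"

definition adj_dom :: "('a::real_normed_vector \<times> 'a) set \<Rightarrow> ('a \<times> 'a \<Rightarrow> 'a \<times> 'a)
    \<Rightarrow> ('a \<times> 'a \<Rightarrow> complex) set" where
  "adj_dom D A = {x' \<in> cdual. \<exists>y'\<in>cdual. \<forall>f\<in>D. x' (A f) = y' f}"

definition adj :: "('a::real_normed_vector \<times> 'a) set \<Rightarrow> ('a \<times> 'a \<Rightarrow> 'a \<times> 'a)
    \<Rightarrow> ('a \<times> 'a \<Rightarrow> complex) \<Rightarrow> ('a \<times> 'a \<Rightarrow> complex)" where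
  "adj D A x' = (THE y'. y' \<in> cdual \<and> (\<forall>f\<in>D. x' (A f) = y' f))"

definition dual_pos :: "('a::banach_lattice \<times> 'a \<Rightarrow> complex) \<Rightarrow> bool" where
  "dual_pos \<phi> \<longleftrightarrow> \<phi> \<in> cdual \<and> (\<forall>x\<ge>0. Im (\<phi> (creal x)) = 0 \<and> 0 \<le> Re (\<phi> (creal x)))"

definition strictly_pos :: "('a::banach_lattice \<times> 'a \<Rightarrow> complex) \<Rightarrow> bool" where
  "strictly_pos \<phi> \<longleftrightarrow> (\<forall>x. 0 \<le> x \<and> x \<noteq> 0 \<longrightarrow> Im (\<phi> (creal x)) = 0 \<and> 0 < Re (\<phi> (creal x)))"

text \<open>Principal ideal (E')_phi = {x' in E'. |x'| <= c phi for some c >= 0}, where the modulus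
  in E' is |x'| = sup over t of (cos t Re x' + sin t Im x') in the dual order.\<close>
definition dual_princ_ideal :: "('a::banach_lattice \<times> 'a \<Rightarrow> complex) \<Rightarrow> ('a \<times> 'a \<Rightarrow> complex) set" where
  "dual_princ_ideal \<phi> = {x' \<in> cdual. \<exists>c\<ge>0. \<forall>t. \<forall>f\<ge>0.
      cos t * Re (x' (creal f)) + sin t * Im (x' (creal f)) \<le> c * Re (\<phi> (creal f))}"

definition vec_succeq :: "'a::banach_lattice \<times> 'a \<Rightarrow> 'a \<Rightarrow> bool" where
  "vec_succeq v u \<longleftrightarrow> snd v = 0 \<and> (\<exists>c>0. c *\<^sub>R u \<le> fst v)"

definition fun_succeq :: "('a::banach_lattice \<times> 'a \<Rightarrow> complex) \<Rightarrow> ('a \<times> 'a \<Rightarrow> complex) \<Rightarrow> bool" where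
  "fun_succeq \<psi> \<phi> \<longleftrightarrow> (\<forall>x. Im (\<psi> (creal x)) = 0) \<and>
     (\<exists>c>0. dual_pos (\<lambda>z. \<psi> z - of_real c * \<phi> z))"

definition pos_op :: "('a::banach_lattice \<times> 'a \<Rightarrow> 'a \<times> 'a) \<Rightarrow> bool" where
  "pos_op T \<longleftrightarrow> (\<forall>f\<in>Epos. T f \<in> Epos)"

definition op_succeq :: "('a::banach_lattice \<times> 'a \<Rightarrow> 'a \<times> 'a) \<Rightarrow> ('a \<times> 'a \<Rightarrow> 'a \<times> 'a) \<Rightarrow> bool" where
  "op_succeq T S \<longleftrightarrow> (\<exists>c>0. pos_op (\<lambda>z. T z - c *\<^sub>R S z))"

definition rank_one :: "'a::banach_lattice \<Rightarrow> ('a \<times> 'a \<Rightarrow> complex) \<Rightarrow> ('a \<times> 'a \<Rightarrow> 'a \<times> 'a)" where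
  "rank_one u \<phi> = (\<lambda>f. cscale (\<phi> f) (creal u))"

definition in_resolvent_set :: "complex \<Rightarrow> ('a::real_normed_vector \<times> 'a) set \<Rightarrow> ('a \<times> 'a \<Rightarrow> 'a \<times> 'a) \<Rightarrow> bool" where
  "in_resolvent_set \<mu> D A \<longleftrightarrow> bij_betw (\<lambda>z. cscale \<mu> z - A z) D UNIV \<and>
     bounded_clinear (inv_into D (\<lambda>z. cscale \<mu> z - A z))"

definition resolvent :: "complex \<Rightarrow> ('a::real_normed_vector \<times> 'a) set \<Rightarrow> ('a \<times> 'a \<Rightarrow> 'a \<times> 'a)
    \<Rightarrow> ('a \<times> 'a \<Rightarrow> 'a \<times> 'a)" where
  "resolvent \<mu> D A = inv_into D (\<lambda>z. cscale \<mu> z - A z)"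

end

theory Submission
  imports Defs
begin

text \<open>Let \<open>\<alpha> = 1 / (\<mu>\<^sub>0 - \<lambda>\<^sub>0)\<close>. The resolvent \<open>R = R(\<mu>\<^sub>0, A)\<close> maps the eigenvector \<open>v\<close> to
  \<open>\<alpha> v\<close>, and \<open>\<psi> \<circ> R = \<alpha> \<psi>\<close> for the dual eigenvector \<open>\<psi>\<close>; both lie in the domains of all
  powers of \<open>A\<close> resp. \<open>A'\<close>, so the domination hypotheses give \<open>c\<^sub>0 u \<le> v \<le> C\<^sub>1 u\<close> and
  \<open>c\<^sub>1 \<phi> \<le> \<psi> \<le> C\<^sub>2 \<phi>\<close>. Suppose \<open>R \<ge> - c u \<otimes> \<phi>\<close>. For \<open>x \<ge> 0\<close> write \<open>R x = y - c \<phi>(x) u\<close> with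
  \<open>y \<ge> 0\<close>, so that \<open>R\<^sup>n\<^sup>+\<^sup>1 x = R\<^sup>n y - c \<phi>(x) R\<^sup>n u\<close>. By induction \<open>R\<^sup>n y \<ge> - C \<phi>(y) u\<close>, and
  \<open>\<phi>(y) \<le> \<psi>(y) / c\<^sub>1 = (\<alpha> \<psi>(x) + c \<phi>(x) \<psi>(u)) / c\<^sub>1\<close> is controlled by \<open>\<phi>(x)\<close>; moreover
  \<open>R\<^sup>n u \<le> K u\<close> because \<open>u\<close> is \<open>v / c\<^sub>0\<close> minus a positive vector and \<open>R\<^sup>n v = \<alpha>\<^sup>n v\<close>.
  Part (b) is part (a) applied to \<open>-R\<close>.\<close>

lemma add_nonneg_iff_neg_le: "0 \<le> a + b \<longleftrightarrow> - b \<le> (a :: 'a::ordered_ab_group_add)"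
  by (metis diff_ge_0_iff_ge diff_minus_eq_add)

lemma Epos_iff: "z \<in> Epos \<longleftrightarrow> snd z = 0 \<and> 0 \<le> fst z"
  unfolding Epos_def creal_def by (cases z) auto

lemma creal_simps [simp]: "fst (creal x) = x" "snd (creal x) = 0"
  by (simp_all add: creal_def)

lemma creal_add: "creal (x + y) = creal x + creal y"
  and creal_scaleR: "creal (a *\<^sub>R x) = a *\<^sub>R creal x"
  by (simp_all add: creal_def)

lemma cscale_of_real [simp]: "cscale (of_real r) z = r *\<^sub>R z"
  by (simp add: cscale_def)

lemma linear_funpow: "linear (f :: 'a::real_vector \<Rightarrow> 'a) \<Longrightarrow> linear (f ^^ n)"
  by (induction n) (simp_all add: linear_id linear_compose)

lemma funpow_eigenvector:
  "linear f \<Longrightarrow> f x = a *\<^sub>R x \<Longrightarrow> (f ^^ n) x = (a ^ n) *\<^sub>R x"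
  by (induction n) (simp_all add: linear_scale)

lemma funpow_neg:
  "linear (f :: 'a::real_vector \<Rightarrow> 'a) \<Longrightarrow> ((\<lambda>z. - f z) ^^ n) x = ((-1) ^ n) *\<^sub>R (f ^^ n) x"
  by (induction n) (simp_all add: linear_scale linear_neg)

subsection \<open>Resolvents and adjoints\<close>

lemma resolvent_linear: "in_resolvent_set \<mu> D A \<Longrightarrow> linear (resolvent \<mu> D A)"
  unfolding in_resolvent_set_def resolvent_def bounded_clinear_def
  by (auto intro: bounded_linear.linear)

lemma resolvent_inverse:
  assumes "in_resolvent_set \<mu> D A"
  shows resolvent_in_domain: "resolvent \<mu> D A z \<in> D"
    and resolvent_right_inverse: "cscale \<mu> (resolvent \<mu> D A z) - A (resolvent \<mu> D A z) = z"
    and resolvent_left_inverse: "w \<in> D \<Longrightarrow> resolvent \<mu> D A (cscale \<mu> w - A w) = w"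
  using assms unfolding in_resolvent_set_def resolvent_def bij_betw_def
  by (auto intro: inv_into_into f_inv_into_f inv_into_f_f)

lemma resolvent_eigenvector:
  assumes \<mu>: "in_resolvent_set (of_real \<mu>) D A" and v: "v \<in> D" "v \<noteq> 0" "A v = lam *\<^sub>R v"
  shows "\<mu> \<noteq> lam" and "resolvent (of_real \<mu>) D A v = (1 / (\<mu> - lam)) *\<^sub>R v"
proof -
  let ?R = "resolvent (of_real \<mu>) D A"
  have "v = ?R ((\<mu> - lam) *\<^sub>R v)"
    using resolvent_left_inverse[OF \<mu> v(1)] v(3) by (simp add: scaleR_diff_left)
  then have v_eq: "v = (\<mu> - lam) *\<^sub>R ?R v"
    by (simp add: linear_scale[OF resolvent_linear[OF \<mu>]])
  then show "\<mu> \<noteq> lam" using v(2) by auto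
  then show "?R v = (1 / (\<mu> - lam)) *\<^sub>R v"
    by (subst v_eq) simp
qed

lemma cdual_unique:
  assumes "y1 \<in> cdual" "y2 \<in> cdual" "\<forall>f\<in>D. y1 f = y2 f" "densely_defined D"
  shows "y1 = y2"
proof -
  have "continuous_on UNIV y1" "continuous_on UNIV y2"
    using assms(1,2) unfolding cdual_def by (auto intro: linear_continuous_on)
  then have "closed {z. y1 z = y2 z}" by (intro closed_Collect_eq) auto
  moreover have "D \<subseteq> {z. y1 z = y2 z}" using assms(3) by auto
  ultimately have "closure D \<subseteq> {z. y1 z = y2 z}" by (rule closure_minimal[rotated])
  then show ?thesis using assms(4) unfolding densely_defined_def by auto
qed

lemma adj_eq:
  assumes "y' \<in> cdual" "\<forall>f\<in>D. x' (A f) = y' f" "densely_defined D"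
  shows "adj D A x' = y'"
  unfolding adj_def
proof (rule the_equality)
  show "y' \<in> cdual \<and> (\<forall>f\<in>D. x' (A f) = y' f)" using assms by auto
  fix y assume "y \<in> cdual \<and> (\<forall>f\<in>D. x' (A f) = y f)"
  then show "y = y'" using assms by (intro cdual_unique[of y y' D]) auto
qed

lemma adj_dom_adj:
  assumes "\<psi> \<in> adj_dom D A" "densely_defined D"
  shows "adj D A \<psi> \<in> cdual" and "f \<in> D \<Longrightarrow> \<psi> (A f) = adj D A \<psi> f"
proof -
  obtain y' where y': "y' \<in> cdual" "\<forall>f\<in>D. \<psi> (A f) = y' f"
    using assms(1) unfolding adj_dom_def by blast
  then have "adj D A \<psi> = y'" using assms(2) by (rule adj_eq)
  then show "adj D A \<psi> \<in> cdual" and "f \<in> D \<Longrightarrow> \<psi> (A f) = adj D A \<psi> f"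
    using y' by auto
qed

lemma cdual_mult: "\<psi> \<in> cdual \<Longrightarrow> (\<lambda>z. a * \<psi> z) \<in> cdual"
  unfolding cdual_def by (auto intro: bounded_linear_compose[OF bounded_linear_mult_right])

lemma adj_dom_mult:
  assumes "\<psi> \<in> adj_dom D A" "densely_defined D"
  shows "(\<lambda>z. a * \<psi> z) \<in> adj_dom D A" and "adj D A (\<lambda>z. a * \<psi> z) = (\<lambda>z. a * adj D A \<psi> z)"
proof -
  have adj_mult: "(\<lambda>z. a * adj D A \<psi> z) \<in> cdual" by (rule cdual_mult[OF adj_dom_adj(1)[OF assms]])
  have eq: "\<forall>f\<in>D. a * \<psi> (A f) = a * adj D A \<psi> f" using adj_dom_adj(2)[OF assms] by simp
  have "(\<lambda>z. a * \<psi> z) \<in> cdual" using assms(1) cdual_mult unfolding adj_dom_def by blast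
  with adj_mult eq show "(\<lambda>z. a * \<psi> z) \<in> adj_dom D A"
    unfolding adj_dom_def by auto
  show "adj D A (\<lambda>z. a * \<psi> z) = (\<lambda>z. a * adj D A \<psi> z)"
    using adj_mult eq assms(2) by (rule adj_eq)
qed

lemma resolvent_adjoint_eigenvector:
  assumes \<mu>: "in_resolvent_set (of_real \<mu>) D A" and dense: "densely_defined D"
    and \<psi>: "\<psi> \<in> adj_dom D A" "adj D A \<psi> = (\<lambda>z. of_real lam * \<psi> z)" and "\<mu> \<noteq> lam"
  shows "\<psi> (resolvent (of_real \<mu>) D A z) = of_real (1 / (\<mu> - lam)) * \<psi> z"
proof -
  let ?r = "resolvent (of_real \<mu>) D A z"
  have "linear \<psi>" using \<psi>(1) unfolding adj_dom_def cdual_def by (auto intro: bounded_linear.linear)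
  then have "\<psi> z = of_real \<mu> * \<psi> ?r - \<psi> (A ?r)"
    using resolvent_right_inverse[OF \<mu>, of z]
    by (metis cscale_of_real linear_diff linear_scale scaleR_conv_of_real)
  also have "\<dots> = of_real (\<mu> - lam) * \<psi> ?r"
    using adj_dom_adj(2)[OF \<psi>(1) dense resolvent_in_domain[OF \<mu>]] \<psi>(2) by (simp add: algebra_simps)
  finally show ?thesis using \<open>\<mu> \<noteq> lam\<close> by (simp add: field_simps)
qed

lemma eigenvector_in_dom_pow:
  assumes "clinear_on D A" "z \<in> D" "A z = c *\<^sub>R z"
  shows "z \<in> dom_pow UNIV D A m"
  using assms(2,3)
proof (induction m arbitrary: z)
  case (Suc m)
  have "c *\<^sub>R z \<in> D" "A (c *\<^sub>R z) = c *\<^sub>R (c *\<^sub>R z)"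
    using assms(1) Suc.prems unfolding clinear_on_def by (auto intro: subspace_scale)
  then show ?case using Suc by simp
qed simp

lemma adjoint_eigenvector_in_dom_pow:
  assumes "densely_defined D" "\<psi> \<in> adj_dom D A" "adj D A \<psi> = (\<lambda>z. c * \<psi> z)"
  shows "\<psi> \<in> dom_pow cdual (adj_dom D A) (adj D A) m"
  using assms(2,3)
proof (induction m arbitrary: \<psi>)
  case 0
  then show ?case unfolding adj_dom_def by simp
next
  case (Suc m)
  then show ?case using adj_dom_mult[OF Suc.prems(1) assms(1), of c] by simp
qed

lemma pos_op_creal_iff:
  fixes F :: "'a::banach_lattice \<times> 'a \<Rightarrow> 'a \<times> 'a"
  shows "pos_op F \<longleftrightarrow> (\<forall>x\<ge>0. F (creal x) \<in> Epos)"
proof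
  show "pos_op F \<Longrightarrow> \<forall>x\<ge>0. F (creal x) \<in> Epos"
    unfolding pos_op_def by (simp add: Epos_iff)
next
  assume F: "\<forall>x\<ge>0. F (creal x) \<in> Epos"
  show "pos_op F" unfolding pos_op_def
  proof
    fix f :: "'a \<times> 'a" assume "f \<in> Epos"
    then obtain x where "0 \<le> x" "f = creal x" unfolding Epos_def by blast
    with F show "F f \<in> Epos" by simp
  qed
qed

lemma pos_op_scale: "pos_op F \<Longrightarrow> 0 \<le> a \<Longrightarrow> pos_op (\<lambda>z. a *\<^sub>R F z)"
  unfolding pos_op_def Epos_iff by (simp add: scaleR_nonneg_nonneg)

lemma op_succeq_neg_swap: "op_succeq T S \<longleftrightarrow> op_succeq (\<lambda>z. - S z) (\<lambda>z. - T z)"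
proof -
  have *: "op_succeq (\<lambda>z. - S z) (\<lambda>z. - T z)" if TS: "op_succeq T S"
    for T S :: "'a \<times> 'a \<Rightarrow> 'a \<times> 'a"
  proof -
    obtain c where "0 < c" "pos_op (\<lambda>z. T z - c *\<^sub>R S z)" using TS unfolding op_succeq_def by blast
    then have "pos_op (\<lambda>z. (1 / c) *\<^sub>R (T z - c *\<^sub>R S z))" by (simp add: pos_op_scale)
    with \<open>0 < c\<close> show ?thesis
      unfolding op_succeq_def by (intro exI[of _ "1 / c"]) (simp add: algebra_simps)
  qed
  show ?thesis using *[of T S] *[of "\<lambda>z. - S z" "\<lambda>z. - T z"] by auto
qed

lemma princ_ideal_upper_bound: "z \<in> princ_ideal u \<Longrightarrow> \<exists>C\<ge>0. fst z \<le> C *\<^sub>R u"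
proof -
  assume "z \<in> princ_ideal u"
  then obtain C where "0 \<le> C" "\<forall>t. cos t *\<^sub>R fst z + sin t *\<^sub>R snd z \<le> C *\<^sub>R u"
    unfolding princ_ideal_def cmod_le_def by blast
  then show ?thesis by (intro exI[of _ C]) (auto dest: spec[of _ 0])
qed

lemma dual_princ_ideal_upper_bound:
  "\<psi> \<in> dual_princ_ideal \<phi> \<Longrightarrow> \<exists>C\<ge>0. \<forall>x\<ge>0. Re (\<psi> (creal x)) \<le> C * Re (\<phi> (creal x))"
proof -
  assume "\<psi> \<in> dual_princ_ideal \<phi>"
  then obtain C where "0 \<le> C" "\<forall>t. \<forall>x\<ge>0.
      cos t * Re (\<psi> (creal x)) + sin t * Im (\<psi> (creal x)) \<le> C * Re (\<phi> (creal x))"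
    unfolding dual_princ_ideal_def by blast
  then show ?thesis by (intro exI[of _ C]) (auto dest: spec[of _ 0])
qed

lemma fun_succeq_lower_bound:
  "fun_succeq \<psi> \<phi> \<Longrightarrow> \<exists>c>0. \<forall>x\<ge>0. c * Re (\<phi> (creal x)) \<le> Re (\<psi> (creal x))"
proof -
  assume "fun_succeq \<psi> \<phi>"
  then obtain c where "0 < c" "dual_pos (\<lambda>z. \<psi> z - of_real c * \<phi> z)"
    unfolding fun_succeq_def by blast
  then show ?thesis unfolding dual_pos_def by (intro exI[of _ c]) auto
qed

lemma cdual_real_part_linear: "\<psi> \<in> cdual \<Longrightarrow> linear (\<lambda>x. Re (\<psi> (creal x)))"
proof -
  assume "\<psi> \<in> cdual"
  then have "linear \<psi>" unfolding cdual_def by (auto intro: bounded_linear.linear)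
  then show ?thesis
    by (intro linearI) (simp_all add: creal_add creal_scaleR linear_add linear_scale)
qed

lemma rank_one_creal:
  "dual_pos \<phi> \<Longrightarrow> 0 \<le> x \<Longrightarrow> rank_one u \<phi> (creal x) = creal (Re (\<phi> (creal x)) *\<^sub>R u)"
  unfolding dual_pos_def rank_one_def cscale_def by (simp add: creal_def)

subsection \<open>Iterated rank-one lower bounds\<close>

text \<open>\<open>T \<ge> - C u \<otimes> p\<close> on the positive cone of \<open>E\<^sub>\<real>\<close>, for a real functional \<open>p\<close> on \<open>E\<^sub>\<real>\<close>.\<close>
definition rank_one_lower_bound ::
    "('a::banach_lattice \<times> 'a \<Rightarrow> 'a \<times> 'a) \<Rightarrow> 'a \<Rightarrow> ('a \<Rightarrow> real) \<Rightarrow> real \<Rightarrow> bool" where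
  "rank_one_lower_bound T u p C \<longleftrightarrow>
     (\<forall>x\<ge>0. snd (T (creal x)) = 0 \<and> - ((C * p x) *\<^sub>R u) \<le> fst (T (creal x)))"

lemma rank_one_lower_bound_id: "rank_one_lower_bound id u p 0"
  unfolding rank_one_lower_bound_def by simp

lemma rank_one_lower_bound_mono:
  assumes "rank_one_lower_bound T u p C" "C \<le> C'" "0 \<le> u" "\<And>x. 0 \<le> x \<Longrightarrow> 0 \<le> p x"
  shows "rank_one_lower_bound T u p C'"
  unfolding rank_one_lower_bound_def
proof (intro allI impI conjI)
  fix x :: 'a assume "0 \<le> x"
  with assms show "snd (T (creal x)) = 0" unfolding rank_one_lower_bound_def by blast
  have "C * p x \<le> C' * p x" using assms(2,4) \<open>0 \<le> x\<close> by (simp add: mult_right_mono)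
  then have "- ((C' * p x) *\<^sub>R u) \<le> - ((C * p x) *\<^sub>R u)" using assms(3) by (simp add: scaleR_right_mono)
  also have "\<dots> \<le> fst (T (creal x))" using assms(1) \<open>0 \<le> x\<close> unfolding rank_one_lower_bound_def by blast
  finally show "- ((C' * p x) *\<^sub>R u) \<le> fst (T (creal x))" .
qed

lemma pos_op_add_rank_one_iff:
  assumes "dual_pos \<phi>"
  shows "pos_op (\<lambda>z. T z + C *\<^sub>R rank_one u \<phi> z) \<longleftrightarrow>
    rank_one_lower_bound T u (\<lambda>x. Re (\<phi> (creal x))) C"
proof -
  have "T (creal x) + C *\<^sub>R rank_one u \<phi> (creal x) \<in> Epos \<longleftrightarrow>
      snd (T (creal x)) = 0 \<and> - ((C * Re (\<phi> (creal x))) *\<^sub>R u) \<le> fst (T (creal x))"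
    if "0 \<le> x" for x
  proof -
    have "C *\<^sub>R rank_one u \<phi> (creal x) = creal ((C * Re (\<phi> (creal x))) *\<^sub>R u)"
      using rank_one_creal[OF assms that] by (simp add: creal_scaleR)
    then show ?thesis by (simp add: Epos_iff add_nonneg_iff_neg_le)
  qed
  then show ?thesis
    unfolding pos_op_creal_iff rank_one_lower_bound_def by simp
qed

text \<open>\<open>u\<close> is \<open>w / c\<^sub>0\<close> minus a positive vector, and \<open>T\<close> only rescales \<open>w\<close>.\<close>
lemma eigenvector_upper_bound:
  fixes T :: "'a::banach_lattice \<times> 'a \<Rightarrow> 'a \<times> 'a"
  assumes T: "linear T" "rank_one_lower_bound T u p C" "0 \<le> C"
    and p: "\<And>x. 0 \<le> x \<Longrightarrow> 0 \<le> p x"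
    and w: "T (creal w) = \<beta> *\<^sub>R creal w" "0 < c0" "c0 *\<^sub>R u \<le> w" "w \<le> C1 *\<^sub>R u" "0 \<le> C1"
    and u: "0 \<le> u"
  shows "\<exists>K\<ge>0. fst (T (creal u)) \<le> K *\<^sub>R u"
proof -
  define d where "d = (1 / c0) *\<^sub>R w - u"
  have "(1 / c0) *\<^sub>R (c0 *\<^sub>R u) \<le> (1 / c0) *\<^sub>R w"
    using w(2,3) by (intro scaleR_left_mono) auto
  then have d: "0 \<le> d" using w(2) by (simp add: d_def)
  have "0 \<le> w" using w(2,3) u by (meson order_trans scaleR_nonneg_nonneg less_imp_le)
  have "creal u = (1 / c0) *\<^sub>R creal w - creal d"
    by (simp add: d_def creal_def)
  then have "fst (T (creal u)) = (\<beta> / c0) *\<^sub>R w + - fst (T (creal d))"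
    using w(1) by (simp add: linear_diff[OF T(1)] linear_scale[OF T(1)])
  also have "\<dots> \<le> (\<bar>\<beta>\<bar> * C1 / c0) *\<^sub>R u + (C * p d) *\<^sub>R u"
  proof (rule add_mono)
    have "(\<beta> / c0) *\<^sub>R w \<le> (\<bar>\<beta>\<bar> / c0) *\<^sub>R w"
      using \<open>0 \<le> w\<close> w(2) by (intro scaleR_right_mono) (auto simp: divide_right_mono)
    also have "\<dots> \<le> (\<bar>\<beta>\<bar> / c0) *\<^sub>R (C1 *\<^sub>R u)"
      using w(2,4) by (intro scaleR_left_mono) auto
    finally show "(\<beta> / c0) *\<^sub>R w \<le> (\<bar>\<beta>\<bar> * C1 / c0) *\<^sub>R u" by simp
    show "- fst (T (creal d)) \<le> (C * p d) *\<^sub>R u"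
      using T(2) d unfolding rank_one_lower_bound_def by (metis minus_le_iff)
  qed
  also have "\<dots> = (\<bar>\<beta>\<bar> * C1 / c0 + C * p d) *\<^sub>R u" by (simp add: scaleR_add_left)
  finally show ?thesis
    using w(2,5) T(3) p[OF d] by (intro exI[of _ "\<bar>\<beta>\<bar> * C1 / c0 + C * p d"]) simp
qed

text \<open>For \<open>x \<ge> 0\<close> write \<open>R x = y - c p(x) u\<close> with \<open>y \<ge> 0\<close>; the eigenfunctional \<open>q \<asymp> p\<close>
  of \<open>R\<close> bounds \<open>p(y)\<close> by a multiple of \<open>p(x)\<close>.\<close>
lemma rank_one_lower_bound_comp:
  fixes T R :: "'a::banach_lattice \<times> 'a \<Rightarrow> 'a \<times> 'a" and p q :: "'a \<Rightarrow> real"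
  assumes T: "linear T" "rank_one_lower_bound T u p C" "0 \<le> C"
      "fst (T (creal u)) \<le> K *\<^sub>R u"
    and R: "rank_one_lower_bound R u p c" "0 \<le> c"
    and p: "\<And>x. 0 \<le> x \<Longrightarrow> 0 \<le> p x"
    and q: "linear q" "\<And>x. 0 \<le> x \<Longrightarrow> q (fst (R (creal x))) = \<alpha> * q x"
      "0 < cq" "\<And>x. 0 \<le> x \<Longrightarrow> cq * p x \<le> q x" "\<And>x. 0 \<le> x \<Longrightarrow> q x \<le> Cq * p x"
    and u: "0 \<le> u"
  shows "\<exists>C'. rank_one_lower_bound (T \<circ> R) u p C'"
proof -
  define Cf where "Cf = (\<bar>\<alpha>\<bar> * Cq + c * q u) / cq"
  have "rank_one_lower_bound (T \<circ> R) u p (C * Cf + c * K)"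
    unfolding rank_one_lower_bound_def
  proof (intro allI impI conjI)
    fix x :: 'a assume x: "0 \<le> x"
    define y where "y = fst (R (creal x)) + (c * p x) *\<^sub>R u"
    have "snd (R (creal x)) = 0" "- ((c * p x) *\<^sub>R u) \<le> fst (R (creal x))"
      using R(1) x unfolding rank_one_lower_bound_def by auto
    then have y: "0 \<le> y" and Rx: "R (creal x) = creal y - (c * p x) *\<^sub>R creal u"
      by (auto simp: y_def creal_def prod_eq_iff add_nonneg_iff_neg_le)
    have TRx: "(T \<circ> R) (creal x) = T (creal y) - (c * p x) *\<^sub>R T (creal u)"
      by (simp add: Rx linear_diff[OF T(1)] linear_scale[OF T(1)])
    have Ty: "snd (T (creal y)) = 0" "- ((C * p y) *\<^sub>R u) \<le> fst (T (creal y))"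
      and Tu: "snd (T (creal u)) = 0"
      using T(2) y u unfolding rank_one_lower_bound_def by auto
    then show "snd ((T \<circ> R) (creal x)) = 0" unfolding TRx by simp
    have "cq * p y \<le> q y" using q(4)[OF y] .
    also have "q y = \<alpha> * q x + c * p x * q u"
      by (simp add: y_def q(2)[OF x] linear_add[OF q(1)] linear_scale[OF q(1)])
    also have "\<dots> \<le> (\<bar>\<alpha>\<bar> * Cq + c * q u) * p x"
    proof -
      have "0 \<le> q x" using q(3) q(4)[OF x] p[OF x] by (meson order_trans mult_nonneg_nonneg less_imp_le)
      then have "\<alpha> * q x \<le> \<bar>\<alpha>\<bar> * q x" by (simp add: mult_right_mono)
      also have "\<dots> \<le> \<bar>\<alpha>\<bar> * (Cq * p x)" using q(5)[OF x] by (simp add: mult_left_mono)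
      finally show ?thesis by (simp add: algebra_simps)
    qed
    finally have "p y \<le> Cf * p x"
      using q(3) by (simp add: Cf_def field_simps)
    then have "C * p y \<le> C * (Cf * p x)" using T(3) by (rule mult_left_mono)
    then have "- ((C * Cf * p x) *\<^sub>R u) \<le> - ((C * p y) *\<^sub>R u)"
      using u by (simp add: scaleR_right_mono mult.assoc)
    also have "\<dots> \<le> fst (T (creal y))" by (rule Ty(2))
    finally have first: "- ((C * Cf * p x) *\<^sub>R u) \<le> fst (T (creal y))" .
    have "(c * p x) *\<^sub>R fst (T (creal u)) \<le> (c * p x) *\<^sub>R (K *\<^sub>R u)"
      using T(4) R(2) p[OF x] by (intro scaleR_left_mono) auto
    then have second: "- ((c * K * p x) *\<^sub>R u) \<le> - ((c * p x) *\<^sub>R fst (T (creal u)))"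
      by (simp add: mult.commute mult.left_commute)
    show "- (((C * Cf + c * K) * p x) *\<^sub>R u) \<le> fst ((T \<circ> R) (creal x))"
      using add_mono[OF first second] unfolding TRx by (simp add: algebra_simps)
  qed
  then show ?thesis ..
qed

lemma rank_one_lower_bound_funpow:
  fixes R :: "'a::banach_lattice \<times> 'a \<Rightarrow> 'a \<times> 'a" and p q :: "'a \<Rightarrow> real"
  assumes R: "linear R" "rank_one_lower_bound R u p c" "0 \<le> c"
    and p: "\<And>x. 0 \<le> x \<Longrightarrow> 0 \<le> p x"
    and w: "R (creal w) = \<beta> *\<^sub>R creal w" "0 < c0" "c0 *\<^sub>R u \<le> w" "w \<le> C1 *\<^sub>R u" "0 \<le> C1"
    and q: "linear q" "\<And>x. 0 \<le> x \<Longrightarrow> q (fst (R (creal x))) = \<alpha> * q x"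
      "0 < cq" "\<And>x. 0 \<le> x \<Longrightarrow> cq * p x \<le> q x" "\<And>x. 0 \<le> x \<Longrightarrow> q x \<le> Cq * p x"
    and u: "0 \<le> u"
  shows "\<exists>C>0. rank_one_lower_bound (R ^^ n) u p C"
proof -
  have "\<exists>C\<ge>0. rank_one_lower_bound (R ^^ n) u p C"
  proof (induction n)
    case 0
    have "rank_one_lower_bound (R ^^ 0) u p 0"
      unfolding funpow.simps(1) by (rule rank_one_lower_bound_id)
    then show ?case by blast
  next
    case (Suc n)
    then obtain C where C: "0 \<le> C" "rank_one_lower_bound (R ^^ n) u p C" by blast
    have Rn: "linear (R ^^ n)" using R(1) by (rule linear_funpow)
    obtain K where "fst ((R ^^ n) (creal u)) \<le> K *\<^sub>R u"
      using eigenvector_upper_bound[OF Rn C(2,1) p funpow_eigenvector[OF R(1) w(1)] w(2-5) u] by blast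
    from rank_one_lower_bound_comp[OF Rn C(2,1) this R(2,3) p q u]
    obtain C' where "rank_one_lower_bound (R ^^ Suc n) u p C'"
      unfolding funpow_Suc_right by blast
    then have "rank_one_lower_bound (R ^^ Suc n) u p (max C' 0)"
      by (rule rank_one_lower_bound_mono) (use u p in auto)
    then show ?case using max.cobounded2 by blast
  qed
  then obtain C where "0 \<le> C" "rank_one_lower_bound (R ^^ n) u p C" by blast
  then have "rank_one_lower_bound (R ^^ n) u p (C + 1)"
    by (rule_tac rank_one_lower_bound_mono) (use u p in auto)
  then show ?thesis using \<open>0 \<le> C\<close> by (intro exI[of _ "C + 1"]) simp
qed

lemma op_succeq_funpow_neg_rank_one:
  fixes R :: "'a::banach_lattice \<times> 'a \<Rightarrow> 'a \<times> 'a"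
  assumes R: "linear R" "op_succeq R (\<lambda>z. - rank_one u \<phi> z)"
    and \<phi>: "dual_pos \<phi>" and u: "0 \<le> u"
    and v: "R v = \<beta> *\<^sub>R v" "vec_succeq v u" "v \<in> princ_ideal u"
    and \<psi>: "\<psi> \<in> cdual" "\<And>z. \<psi> (R z) = of_real \<alpha> * \<psi> z" "fun_succeq \<psi> \<phi>"
      "\<psi> \<in> dual_princ_ideal \<phi>"
  shows "op_succeq (R ^^ n) (\<lambda>z. - rank_one u \<phi> z)"
proof -
  define p where "p x = Re (\<phi> (creal x))" for x
  define q where "q x = Re (\<psi> (creal x))" for x
  have p_nonneg: "0 \<le> p x" if "0 \<le> x" for x
    using \<phi> that unfolding dual_pos_def p_def by simp
  obtain c where c: "0 < c" "rank_one_lower_bound R u p c"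
    using R(2) pos_op_add_rank_one_iff[OF \<phi>] unfolding op_succeq_def p_def by auto
  obtain c0 where c0: "0 < c0" "c0 *\<^sub>R u \<le> fst v" and "snd v = 0"
    using v(2) unfolding vec_succeq_def by blast
  then have "creal (fst v) = v" by (cases v) (simp add: creal_def)
  then have Rv: "R (creal (fst v)) = \<beta> *\<^sub>R creal (fst v)" using v(1) by simp
  obtain C1 where C1: "0 \<le> C1" "fst v \<le> C1 *\<^sub>R u"
    using princ_ideal_upper_bound[OF v(3)] by blast
  obtain cq where cq: "0 < cq" "\<And>x. 0 \<le> x \<Longrightarrow> cq * p x \<le> q x"
    using fun_succeq_lower_bound[OF \<psi>(3)] unfolding p_def q_def by blast
  obtain Cq where Cq: "\<And>x. 0 \<le> x \<Longrightarrow> q x \<le> Cq * p x"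
    using dual_princ_ideal_upper_bound[OF \<psi>(4)] unfolding p_def q_def by blast
  have q_R: "q (fst (R (creal x))) = \<alpha> * q x" if "0 \<le> x" for x
  proof -
    have "snd (R (creal x)) = 0" using c(2) that unfolding rank_one_lower_bound_def by blast
    then have "creal (fst (R (creal x))) = R (creal x)" by (simp add: creal_def prod_eq_iff)
    then show ?thesis unfolding q_def by (simp add: \<psi>(2))
  qed
  have "linear q" unfolding q_def by (rule cdual_real_part_linear[OF \<psi>(1)])
  from rank_one_lower_bound_funpow[OF R(1) c(2) _ p_nonneg Rv c0 C1(2,1) this q_R cq Cq u]
  obtain C where "0 < C" "rank_one_lower_bound (R ^^ n) u p C" using c(1) by auto
  then show ?thesis
    using pos_op_add_rank_one_iff[OF \<phi>] unfolding op_succeq_def p_def by auto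
qed

lemma op_succeq_rank_one_alternating_funpow:
  fixes R :: "'a::banach_lattice \<times> 'a \<Rightarrow> 'a \<times> 'a"
  assumes R: "linear R" "op_succeq (rank_one u \<phi>) R"
    and \<phi>: "dual_pos \<phi>" and u: "0 \<le> u"
    and v: "R v = \<beta> *\<^sub>R v" "vec_succeq v u" "v \<in> princ_ideal u"
    and \<psi>: "\<psi> \<in> cdual" "\<And>z. \<psi> (R z) = of_real \<alpha> * \<psi> z" "fun_succeq \<psi> \<phi>"
      "\<psi> \<in> dual_princ_ideal \<phi>"
    and n: "1 \<le> n"
  shows "op_succeq (rank_one u \<phi>) (\<lambda>z. ((-1) ^ (n - 1)) *\<^sub>R (R ^^ n) z)"
proof -
  have "linear \<psi>" using \<psi>(1) unfolding cdual_def by (auto intro: bounded_linear.linear)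
  then have "\<psi> (- R z) = of_real (- \<alpha>) * \<psi> z" for z by (simp add: \<psi>(2) linear_neg)
  moreover have "- R v = (- \<beta>) *\<^sub>R v" by (simp add: v(1))
  moreover have "op_succeq (\<lambda>z. - R z) (\<lambda>z. - rank_one u \<phi> z)"
    using R(2) by (rule op_succeq_neg_swap[THEN iffD1])
  ultimately have "op_succeq ((\<lambda>z. - R z) ^^ n) (\<lambda>z. - rank_one u \<phi> z)"
    using op_succeq_funpow_neg_rank_one[OF linear_compose_neg[OF R(1)] _ \<phi> u _ v(2,3) \<psi>(1) _ \<psi>(3,4)]
    by blast
  then have "op_succeq (\<lambda>z. - (- rank_one u \<phi> z)) (\<lambda>z. - ((\<lambda>z. - R z) ^^ n) z)"
    by (rule op_succeq_neg_swap[THEN iffD1])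
  moreover have "- ((\<lambda>z. - R z) ^^ n) z = ((-1) ^ (n - 1)) *\<^sub>R (R ^^ n) z" for z
    using n by (simp add: funpow_neg[OF R(1)] power_eq_if)
  ultimately show ?thesis by simp
qed

theorem proposition4p4:
  fixes D :: "('a::banach_lattice \<times> 'a) set"
    and A :: "'a \<times> 'a \<Rightarrow> 'a \<times> 'a"
    and u :: 'a
    and \<phi> :: "'a \<times> 'a \<Rightarrow> complex"
    and m1 m2 :: nat
    and lambda0 mu0 :: real
  assumes lin: "clinear_on D A"
    and dense: "densely_defined D"
    and closed: "closed_op D A"
    and real: "real_op D A"
    and u_pos: "0 \<le> u"
    and phi_pos: "dual_pos \<phi>"
    and phi_strict: "strictly_pos \<phi>"
    and dom1: "dom_pow UNIV D A m1 \<subseteq> princ_ideal u"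
    and dom2: "dom_pow cdual (adj_dom D A) (adj D A) m2 \<subseteq> dual_princ_ideal \<phi>"
    and eig_A: "\<exists>v. v \<in> D \<and> v \<noteq> 0 \<and> vec_succeq v u \<and>
                   {z \<in> D. A z = lambda0 *\<^sub>R z} = {cscale c v | c. True}"
    and eig_A': "\<exists>\<psi>'. \<psi>' \<in> adj_dom D A \<and> \<psi>' \<noteq> (\<lambda>_. 0) \<and> adj D A \<psi>' = (\<lambda>z. of_real lambda0 * \<psi>' z)"
    and eig_psi: "\<exists>\<psi>. \<psi> \<in> adj_dom D A \<and> adj D A \<psi> = (\<lambda>z. of_real lambda0 * \<psi> z) \<and> fun_succeq \<psi> \<phi>"
    and mu: "in_resolvent_set (of_real mu0) D A"
  shows "(op_succeq (resolvent (of_real mu0) D A) (\<lambda>z. - rank_one u \<phi> z) \<longrightarrow>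
            (\<forall>n\<ge>1. op_succeq (resolvent (of_real mu0) D A ^^ n) (\<lambda>z. - rank_one u \<phi> z)))
       \<and> (op_succeq (rank_one u \<phi>) (resolvent (of_real mu0) D A) \<longrightarrow>
            (\<forall>n\<ge>1. op_succeq (rank_one u \<phi>)
                      (\<lambda>z. ((-1) ^ (n - 1)) *\<^sub>R (resolvent (of_real mu0) D A ^^ n) z)))"
proof -
  define R where "R = resolvent (of_real mu0) D A"
  obtain v where v: "v \<in> D" "v \<noteq> 0" "vec_succeq v u"
    and eigenspace: "{z \<in> D. A z = lambda0 *\<^sub>R z} = {cscale c v | c. True}"
    using eig_A by blast
  have "v \<in> {cscale c v | c. True}" by (intro CollectI exI[of _ 1]) (simp add: cscale_def)
  then have Av: "A v = lambda0 *\<^sub>R v" using eigenspace by blast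
  obtain \<psi> where \<psi>: "\<psi> \<in> adj_dom D A" "adj D A \<psi> = (\<lambda>z. of_real lambda0 * \<psi> z)"
      "fun_succeq \<psi> \<phi>"
    using eig_psi by blast
  have ne: "mu0 \<noteq> lambda0" and Rv: "R v = (1 / (mu0 - lambda0)) *\<^sub>R v"
    using resolvent_eigenvector[OF mu v(1,2) Av] unfolding R_def by auto
  have R\<psi>: "\<psi> (R z) = of_real (1 / (mu0 - lambda0)) * \<psi> z" for z
    using resolvent_adjoint_eigenvector[OF mu dense \<psi>(1,2) ne] unfolding R_def .
  have v_ideal: "v \<in> princ_ideal u" using dom1 eigenvector_in_dom_pow[OF lin v(1) Av] by blast
  have \<psi>_ideal: "\<psi> \<in> dual_princ_ideal \<phi>"
    using dom2 adjoint_eigenvector_in_dom_pow[OF dense \<psi>(1,2)] by blast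
  have \<psi>_dual: "\<psi> \<in> cdual" using \<psi>(1) unfolding adj_dom_def by blast
  have linR: "linear R" unfolding R_def using mu by (rule resolvent_linear)
  show ?thesis unfolding R_def[symmetric]
    using op_succeq_funpow_neg_rank_one[OF linR _ phi_pos u_pos Rv v(3) v_ideal \<psi>_dual R\<psi> \<psi>(3) \<psi>_ideal]
      op_succeq_rank_one_alternating_funpow[OF linR _ phi_pos u_pos Rv v(3) v_ideal \<psi>_dual R\<psi> \<psi>(3) \<psi>_ideal]
    by blast
qed

end
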